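(* Fix an integer $m\ge 2$. For $n\ge m$, let $\widehat{\bm Q}\in\mathbb{R}^{n\times(m-1)}$ be a random matrix uniformly (Haar) distributed on the set of $n\times(m-1)$ matrices with orthonormal columns all orthogonal to $\bm\xi_n$, let $\bm Q=[\widehat{\bm Q}\ \ \bm\xi_n]^T\in\mathbb{R}^{m\times n}$, and let \[ \bm W=[W_{ij}]=\bm L\bm Q+\frac{1}{\sqrt{mn}}\bm J_{m\times n}, \] where $\bm L\in\mathbb{R}^{m\times m}$ is given by $L_{ii}=\sqrt{\frac{m-i}{m-i+1}}$ for $i<m$, $L_{ij}=-\frac{1}{\sqrt{(m-j+1)(m-j)}}$ for $1\le j<i\le m$, and $L_{ij}=0$ otherwise. Then for every $C>2$, \[ \mathbb{P}\left(\max_{1\le i\le m,\,1\le j\le n}|W_{ij}|\ge C\sqrt{\frac{\log n}{n}}+\frac{1}{\sqrt{mn}}\right)\to 0\quad\text{as } n\to\infty. \]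
   Context: $\bm 1_k$ denotes the all-ones vector in $\mathbb{R}^k$, $\bm\xi_k=\frac{1}{\sqrt k}\bm 1_k$, and $\bm J_{m\times n}$ is the $m\times n$ all-ones matrix. $\bm L$ is the Cholesky factor of $\bm I_m-\frac1m\bm J_m$. *)

theory Defs
  imports "HOL-Probability.Probability"
begin

text \<open>All matrices are represented as functions on index pairs, with 1-based indices.
  A random n x k matrix takes values in PiM ({1..n} x {1..k}) (\<lambda>_. borel).\<close>

definition mat_space :: "nat \<Rightarrow> nat \<Rightarrow> (nat \<times> nat \<Rightarrow> real) measure" where
  "mat_space n k = PiM ({1..n} \<times> {1..k}) (\<lambda>_. borel)"

definition stiefel_perp :: "nat \<Rightarrow> nat \<Rightarrow> (nat \<times> nat \<Rightarrow> real) set" where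
  "stiefel_perp n k = {Q \<in> PiE ({1..n} \<times> {1..k}) (\<lambda>_. UNIV).
     (\<forall>j\<in>{1..k}. \<forall>l\<in>{1..k}. (\<Sum>i=1..n. Q (i,j) * Q (i,l)) = (if j = l then 1 else 0)) \<and>
     (\<forall>j\<in>{1..k}. (\<Sum>i=1..n. Q (i,j) / sqrt (real n)) = 0)}"

definition orth_fix_xi :: "nat \<Rightarrow> (nat \<times> nat \<Rightarrow> real) set" where
  "orth_fix_xi n = {U. (\<forall>i\<in>{1..n}. \<forall>j\<in>{1..n}.
        (\<Sum>k=1..n. U (k,i) * U (k,j)) = (if i = j then 1 else 0)) \<and>
     (\<forall>i\<in>{1..n}. (\<Sum>j=1..n. U (i,j) * (1 / sqrt (real n))) = 1 / sqrt (real n))}"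

definition lmul :: "nat \<Rightarrow> nat \<Rightarrow> (nat \<times> nat \<Rightarrow> real) \<Rightarrow> (nat \<times> nat \<Rightarrow> real) \<Rightarrow> (nat \<times> nat \<Rightarrow> real)" where
  "lmul n k U Q = restrict (\<lambda>(i,j). \<Sum>l=1..n. U (i,l) * Q (l,j)) ({1..n} \<times> {1..k})"

text \<open>X is Haar (uniformly) distributed on stiefel_perp n k: it is supported on that set and its
  law is invariant under every orthogonal transformation fixing xi_n (the unique such law).\<close>
definition haar_stiefel_perp :: "'a measure \<Rightarrow> nat \<Rightarrow> nat \<Rightarrow> ('a \<Rightarrow> nat \<times> nat \<Rightarrow> real) \<Rightarrow> bool" where
  "haar_stiefel_perp M n k X \<longleftrightarrow>
     X \<in> measurable M (mat_space n k) \<and>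
     (AE \<omega> in M. X \<omega> \<in> stiefel_perp n k) \<and>
     (\<forall>U\<in>orth_fix_xi n. distr M (mat_space n k) (\<lambda>\<omega>. lmul n k U (X \<omega>)) = distr M (mat_space n k) X)"

definition Lmat :: "nat \<Rightarrow> nat \<Rightarrow> nat \<Rightarrow> real" where
  "Lmat m i j =
     (if i = j \<and> i < m then sqrt ((real m - real i) / (real m - real i + 1))
      else if 1 \<le> j \<and> j < i \<and> i \<le> m then - 1 / sqrt ((real m - real j + 1) * (real m - real j))
      else 0)"

definition Qmat :: "nat \<Rightarrow> nat \<Rightarrow> (nat \<times> nat \<Rightarrow> real) \<Rightarrow> nat \<Rightarrow> nat \<Rightarrow> real" where
  "Qmat m n Qh r k = (if r < m then Qh (k, r) else 1 / sqrt (real n))"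

definition Wmat :: "nat \<Rightarrow> nat \<Rightarrow> (nat \<times> nat \<Rightarrow> real) \<Rightarrow> nat \<Rightarrow> nat \<Rightarrow> real" where
  "Wmat m n Qh i k = (\<Sum>r=1..m. Lmat m i r * Qmat m n Qh r k) + 1 / sqrt (real m * real n)"

end

theory Submission
  imports Defs "HOL-Probability.Hoeffding"
begin

(* For a sign vector s with s_n = 1, the matrix D_s = H^T diag(s) H is orthogonal and fixes xi_n,
  because the last row of the Hartley (real Fourier) basis H is xi_n; so the law of Qhat is
  invariant under Qhat |-> D_s Qhat. The entries of W - J/sqrt(mn) = L Q are the coordinates of
  the rows v of L Qhat^T (the last column of L vanishes), and each such v sums to 0 and has norm
  at most 1. Hence (D_s v)_k is the Rademacher sum  sum_{j<n} s_j H_{jk} (H v)_j, whose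
  coefficients have squares summing to at most 2/n. Averaging over all 2^(n-1) sign vectors and
  using Chernoff's bound, each entry exceeds t in absolute value with probability at most
  2 exp(-n t^2/4); a union bound over the mn entries at t = C sqrt(log n / n) gives
  2 m n^(1 - C^2/4), which tends to 0 for C > 2. *)

section \<open>Rademacher sums\<close>

lemma cosh_le_exp_square_half:
  fixes x :: real
  shows "cosh x \<le> exp (x\<^sup>2 / 2)"
proof -
  have "cosh x \<le> exp (x\<^sup>2 / 2)" if "x \<ge> 0" for x :: real
  proof -
    have "-(2*x) * (1/2) + ln (1 + (1/2) * (exp (2*x) - 1)) \<le> (2*x)\<^sup>2 / 8"
      using Hoeffdings_lemma_aux[of "2*x" "1/2"] that by simp
    then have "ln ((1 + exp (2*x)) / 2) \<le> x + x\<^sup>2 / 2"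
      by (simp add: power2_eq_square algebra_simps add_divide_distrib)
    then have le: "1 + exp (2*x) \<le> 2 * exp (x + x\<^sup>2 / 2)"
      using ln_le_cancel_iff[of "(1 + exp (2*x)) / 2" "exp (x + x\<^sup>2 / 2)"]
      by (simp add: add_pos_pos field_simps)
    have "2 * cosh x = (1 + exp (2*x)) * exp (-x)"
      by (simp add: cosh_field_def distrib_right flip: exp_add)
    also have "\<dots> \<le> 2 * exp (x + x\<^sup>2 / 2) * exp (-x)"
      using le by (rule mult_right_mono) simp
    also have "\<dots> = 2 * exp (x\<^sup>2 / 2)"
      by (simp add: mult.assoc flip: exp_add)
    finally show ?thesis by simp
  qed
  from this[of x] this[of "-x"] show ?thesis
    by (cases "x \<ge> 0") auto
qed

definition sign_vec :: "'a set \<Rightarrow> 'a \<Rightarrow> real" where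
  "sign_vec S j = (if j \<in> S then -1 else 1)"

lemma sum_Pow_exp_sign_vec:
  assumes "finite A"
  shows "(\<Sum>S\<in>Pow A. exp (l * (\<Sum>j\<in>A. sign_vec S j * c j))) = (\<Prod>j\<in>A. 2 * cosh (l * c j))"
  using assms
proof (induction A rule: finite_induct)
  case empty
  then show ?case by simp
next
  case (insert a A)
  let ?F = "\<lambda>S. exp (l * (\<Sum>j\<in>A. sign_vec S j * c j))"
  have inj: "inj_on (insert a) (Pow A)"
    using insert.hyps by (intro inj_onI) (metis PowD insert_ident subset_iff)
  have unflipped: "(\<Sum>j\<in>insert a A. sign_vec S j * c j) = c a + (\<Sum>j\<in>A. sign_vec S j * c j)"
    if "S \<in> Pow A" for S
    using that insert.hyps by (auto simp: sign_vec_def)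
  have flipped: "(\<Sum>j\<in>insert a A. sign_vec (insert a S) j * c j) = - c a + (\<Sum>j\<in>A. sign_vec S j * c j)"
    if "S \<in> Pow A" for S
  proof -
    have "(\<Sum>j\<in>A. sign_vec (insert a S) j * c j) = (\<Sum>j\<in>A. sign_vec S j * c j)"
      using insert.hyps by (intro sum.cong refl) (auto simp: sign_vec_def)
    then show ?thesis using insert.hyps by (simp add: sign_vec_def)
  qed
  have "(\<Sum>S\<in>Pow (insert a A). exp (l * (\<Sum>j\<in>insert a A. sign_vec S j * c j)))
      = (\<Sum>S\<in>Pow A. exp (l * (\<Sum>j\<in>insert a A. sign_vec S j * c j)))
        + (\<Sum>S\<in>Pow A. exp (l * (\<Sum>j\<in>insert a A. sign_vec (insert a S) j * c j)))"
    unfolding Pow_insert using inj insert.hyps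
    by (subst sum.union_disjoint) (auto simp: sum.reindex)
  also have "\<dots> = (\<Sum>S\<in>Pow A. exp (l * c a) * ?F S) + (\<Sum>S\<in>Pow A. exp (- (l * c a)) * ?F S)"
    by (intro arg_cong2[where f="(+)"] sum.cong refl)
      (simp_all add: unflipped flipped distrib_left right_diff_distrib flip: exp_add)
  also have "\<dots> = (exp (l * c a) + exp (- (l * c a))) * (\<Sum>S\<in>Pow A. ?F S)"
    by (simp only: distrib_right sum_distrib_left sum.distrib)
  also have "\<dots> = 2 * cosh (l * c a) * (\<Sum>S\<in>Pow A. ?F S)"
    by (simp add: cosh_field_def)
  also have "\<dots> = (\<Prod>j\<in>insert a A. 2 * cosh (l * c j))"
    using insert by simp
  finally show ?case .
qed

lemma card_sign_vec_sum_ge: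
  assumes "finite A" and "(\<Sum>j\<in>A. (c j)\<^sup>2) \<le> s" and "s > 0" and "t \<ge> 0"
  shows "real (card {S\<in>Pow A. t \<le> (\<Sum>j\<in>A. sign_vec S j * c j)}) \<le> 2 ^ card A * exp (- t\<^sup>2 / (2 * s))"
proof -
  define l where "l = t / s"
  have "l \<ge> 0" using assms by (simp add: l_def)
  define F where "F S = (\<Sum>j\<in>A. sign_vec S j * c j)" for S
  have "real (card {S\<in>Pow A. t \<le> F S}) * exp (l * t) = (\<Sum>S\<in>{S\<in>Pow A. t \<le> F S}. exp (l * t))"
    by simp
  also have "\<dots> \<le> (\<Sum>S\<in>{S\<in>Pow A. t \<le> F S}. exp (l * F S))"
    using \<open>l \<ge> 0\<close> by (intro sum_mono) (simp add: mult_left_mono)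
  also have "\<dots> \<le> (\<Sum>S\<in>Pow A. exp (l * F S))"
    using assms by (intro sum_mono2) auto
  also have "\<dots> = (\<Prod>j\<in>A. 2 * cosh (l * c j))"
    unfolding F_def by (rule sum_Pow_exp_sign_vec[OF \<open>finite A\<close>])
  also have "\<dots> \<le> (\<Prod>j\<in>A. 2 * exp ((l * c j)\<^sup>2 / 2))"
    by (intro prod_mono conjI mult_left_mono cosh_le_exp_square_half) simp_all
  also have "\<dots> = 2 ^ card A * (\<Prod>j\<in>A. exp (l\<^sup>2 / 2 * (c j)\<^sup>2))"
    by (simp add: prod.distrib power_mult_distrib mult_ac)
  also have "\<dots> = 2 ^ card A * exp (l\<^sup>2 / 2 * (\<Sum>j\<in>A. (c j)\<^sup>2))"
    using assms by (simp add: exp_sum sum_distrib_left)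
  also have "\<dots> \<le> 2 ^ card A * exp (l\<^sup>2 / 2 * s)"
    using assms by (simp add: mult_left_mono)
  finally have "real (card {S\<in>Pow A. t \<le> F S}) * exp (l * t) \<le> 2 ^ card A * exp (l\<^sup>2 / 2 * s)" .
  then have "real (card {S\<in>Pow A. t \<le> F S}) * exp (l * t) * exp (- (l * t))
      \<le> 2 ^ card A * exp (l\<^sup>2 / 2 * s) * exp (- (l * t))"
    by (rule mult_right_mono) simp
  then have "real (card {S\<in>Pow A. t \<le> F S}) \<le> 2 ^ card A * exp (l\<^sup>2 / 2 * s + - (l * t))"
    by (simp add: mult.assoc flip: exp_add)
  moreover have "l\<^sup>2 / 2 * s + - (l * t) = - t\<^sup>2 / (2 * s)"
    using assms by (simp add: l_def power2_eq_square field_simps)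
  ultimately show ?thesis
    unfolding F_def by simp
qed

lemma card_sign_vec_sum_abs_ge:
  assumes "finite A" and "(\<Sum>j\<in>A. (c j)\<^sup>2) \<le> s" and "s > 0" and "t \<ge> 0"
  shows "real (card {S\<in>Pow A. t \<le> \<bar>\<Sum>j\<in>A. sign_vec S j * c j\<bar>}) \<le> 2 * 2 ^ card A * exp (- t\<^sup>2 / (2 * s))"
proof -
  let ?up = "{S\<in>Pow A. t \<le> (\<Sum>j\<in>A. sign_vec S j * c j)}"
  let ?down = "{S\<in>Pow A. t \<le> (\<Sum>j\<in>A. sign_vec S j * - c j)}"
  have "{S\<in>Pow A. t \<le> \<bar>\<Sum>j\<in>A. sign_vec S j * c j\<bar>} \<subseteq> ?up \<union> ?down"
    by (auto simp: sum_negf abs_le_iff)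
  then have "card {S\<in>Pow A. t \<le> \<bar>\<Sum>j\<in>A. sign_vec S j * c j\<bar>} \<le> card (?up \<union> ?down)"
    using \<open>finite A\<close> by (intro card_mono) auto
  also have "\<dots> \<le> card ?up + card ?down"
    by (rule card_Un_le)
  finally have "card {S\<in>Pow A. t \<le> \<bar>\<Sum>j\<in>A. sign_vec S j * c j\<bar>} \<le> card ?up + card ?down" .
  moreover have "real (card ?up) \<le> 2 ^ card A * exp (- t\<^sup>2 / (2 * s))"
    and "real (card ?down) \<le> 2 ^ card A * exp (- t\<^sup>2 / (2 * s))"
    using assms by (intro card_sign_vec_sum_ge; simp)+
  ultimately show ?thesis by linarith
qed

section \<open>The Hartley basis\<close>

lemma sum_cis_roots_of_unity:
  fixes n :: nat and d :: int
  assumes "n > 0"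
  shows "(\<Sum>k=1..n. cis (2 * pi * real_of_int d * real k / real n)) = (if int n dvd d then of_nat n else 0)"
proof -
  define w where "w = cis (2 * pi * real_of_int d / real n)"
  have power_w: "cis (2 * pi * real_of_int d * real k / real n) = w ^ k" for k
    by (simp only: w_def Complex.DeMoivre) (simp add: mult_ac)
  have sum_w: "(\<Sum>k=1..n. cis (2 * pi * real_of_int d * real k / real n)) = w * (\<Sum>k<n. w ^ k)"
    unfolding power_w using sum.atLeast1_atMost_eq[of "\<lambda>k. w ^ k" n] by (simp add: sum_distrib_left)
  show ?thesis
  proof (cases "int n dvd d")
    case True
    then obtain q where "d = int n * q" by blast
    then have "w = cis (2 * pi * real_of_int q)" using assms by (simp add: w_def field_simps)
    then have "w = 1" by (simp add: complex_eq_iff)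
    then show ?thesis using sum_w True by simp
  next
    case False
    have "w \<noteq> 1"
    proof
      assume "w = 1"
      then have "cos (2 * pi * real_of_int d / real n) = 1" by (simp add: w_def complex_eq_iff)
      then obtain j :: int where "2 * pi * real_of_int d / real n = real_of_int j * 2 * pi"
        using cos_one_2pi_int by blast
      then have "real_of_int d = real_of_int (j * int n)" using assms by (simp add: field_simps)
      then show False using False by (simp only: of_int_eq_iff) simp
    qed
    moreover have "w ^ n = cis (2 * pi * real_of_int d)"
      using assms by (simp only: w_def Complex.DeMoivre) simp
    then have "w ^ n = 1"
      by (simp add: complex_eq_iff)
    ultimately show ?thesis using sum_w False by (simp add: geometric_sum)
  qed
qed

lemma sum_cos_roots_of_unity:
  fixes n :: nat and d :: int
  assumes "n > 0"
  shows "(\<Sum>k=1..n. cos (2 * pi * real_of_int d * real k / real n)) = (if int n dvd d then real n else 0)"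
  using arg_cong[OF sum_cis_roots_of_unity[OF assms, of d], of Re] by simp

lemma sum_sin_roots_of_unity:
  fixes n :: nat and d :: int
  assumes "n > 0"
  shows "(\<Sum>k=1..n. sin (2 * pi * real_of_int d * real k / real n)) = 0"
  using arg_cong[OF sum_cis_roots_of_unity[OF assms, of d], of Im] by simp

definition hartley :: "nat \<Rightarrow> nat \<Rightarrow> nat \<Rightarrow> real" where
  "hartley n j k = (cos (2 * pi * real j * real k / real n) + sin (2 * pi * real j * real k / real n)) / sqrt (real n)"

lemma hartley_commute: "hartley n j k = hartley n k j"
  unfolding hartley_def by (simp add: mult_ac)

lemma hartley_orthonormal:
  assumes "n > 0" and "j \<in> {1..n}" and "l \<in> {1..n}"
  shows "(\<Sum>k=1..n. hartley n j k * hartley n l k) = (if j = l then 1 else 0)"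
proof -
  have product: "hartley n j k * hartley n l k = (cos (2 * pi * real_of_int (int j - int l) * real k / real n)
      + sin (2 * pi * real_of_int (int (j + l)) * real k / real n)) / real n" for k
  proof -
    define a where "a = 2 * pi * real j * real k / real n"
    define b where "b = 2 * pi * real l * real k / real n"
    have "2 * pi * real_of_int (int j - int l) * real k / real n = a - b"
      and "2 * pi * real_of_int (int (j + l)) * real k / real n = a + b"
      by (simp_all add: a_def b_def algebra_simps diff_divide_distrib add_divide_distrib)
    moreover have "(cos a + sin a) * (cos b + sin b) = cos (a - b) + sin (a + b)"
      by (simp add: cos_diff sin_add algebra_simps)
    ultimately show ?thesis
      using assms by (simp add: hartley_def a_def b_def)
  qed
  have "int n dvd (int j - int l) \<longleftrightarrow> j = l"
  proof
    assume "int n dvd (int j - int l)"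
    then obtain q where q: "int j - int l = int n * q" by blast
    have "\<bar>int j - int l\<bar> < int n" using assms by auto
    then have "int n * \<bar>q\<bar> < int n * 1" using q by (simp add: abs_mult)
    then have "\<bar>q\<bar> < 1" using assms by (simp only: mult_less_cancel_left_pos of_nat_0_less_iff)
    then have "q = 0" by simp
    then show "j = l" using q by simp
  qed simp
  moreover have "(\<Sum>k=1..n. hartley n j k * hartley n l k)
      = ((\<Sum>k=1..n. cos (2 * pi * real_of_int (int j - int l) * real k / real n))
        + (\<Sum>k=1..n. sin (2 * pi * real_of_int (int (j + l)) * real k / real n))) / real n"
    unfolding product by (simp only: sum.distrib flip: sum_divide_distrib)
  ultimately show ?thesis
    using assms by (simp only: sum_cos_roots_of_unity sum_sin_roots_of_unity) simp
qed

lemma hartley_synthesis_inner: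
  assumes "n > 0"
  shows "(\<Sum>k=1..n. (\<Sum>j=1..n. a j * hartley n j k) * (\<Sum>j=1..n. b j * hartley n j k)) = (\<Sum>j=1..n. a j * b j)"
proof -
  have "(\<Sum>k=1..n. (\<Sum>j=1..n. a j * hartley n j k) * (\<Sum>j=1..n. b j * hartley n j k))
      = (\<Sum>k=1..n. \<Sum>j=1..n. \<Sum>l=1..n. a j * b l * (hartley n j k * hartley n l k))"
    by (simp add: sum_product mult_ac)
  also have "\<dots> = (\<Sum>j=1..n. \<Sum>l=1..n. \<Sum>k=1..n. a j * b l * (hartley n j k * hartley n l k))"
    by (subst sum.swap, rule sum.cong[OF refl], subst sum.swap, rule refl)
  also have "\<dots> = (\<Sum>j=1..n. \<Sum>l=1..n. a j * b l * (\<Sum>k=1..n. hartley n j k * hartley n l k))"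
    by (simp add: sum_distrib_left)
  also have "\<dots> = (\<Sum>j=1..n. \<Sum>l=1..n. if j = l then a j * b l else 0)"
    using assms by (intro sum.cong refl) (subst hartley_orthonormal; auto)
  also have "\<dots> = (\<Sum>j=1..n. a j * b j)"
    by simp
  finally show ?thesis .
qed

lemma hartley_parseval:
  assumes "n > 0"
  shows "(\<Sum>j=1..n. (\<Sum>l=1..n. hartley n j l * v l)\<^sup>2) = (\<Sum>l=1..n. (v l)\<^sup>2)"
  using hartley_synthesis_inner[OF assms, of v v]
  by (simp add: power2_eq_square hartley_commute mult_ac)

lemma hartley_square_le: "(hartley n j k)\<^sup>2 \<le> 2 / real n"
proof -
  define a where "a = 2 * pi * real j * real k / real n"
  have "(cos a + sin a)\<^sup>2 + (cos a - sin a)\<^sup>2 = 2"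
    by (simp add: power2_eq_square algebra_simps)
  then have "(cos a + sin a)\<^sup>2 \<le> 2"
    using zero_le_power2[of "cos a - sin a"] by linarith
  then show ?thesis
    unfolding hartley_def a_def[symmetric] by (simp add: power_divide divide_right_mono)
qed

lemma hartley_last_row:
  assumes "n > 0"
  shows "hartley n n k = 1 / sqrt (real n)"
proof -
  have "2 * pi * real n * real k / real n = 2 * pi * real_of_int (int k)"
    using assms by simp
  then show ?thesis
    unfolding hartley_def using cos_int_2pin[of "int k"] sin_int_2pin[of "int k"] by simp
qed

lemma hartley_row_sum:
  assumes "n > 0" and "j \<in> {1..n}"
  shows "(\<Sum>l=1..n. hartley n j l) = (if j = n then sqrt (real n) else 0)"
proof -
  have "(\<Sum>l=1..n. hartley n j l) = sqrt (real n) * (\<Sum>l=1..n. hartley n j l * hartley n n l)"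
    using assms by (simp add: hartley_last_row sum_distrib_left)
  then show ?thesis
    using hartley_orthonormal[OF assms, of n] assms by simp
qed

definition hartley_flip :: "nat \<Rightarrow> nat set \<Rightarrow> nat \<times> nat \<Rightarrow> real" where
  "hartley_flip n S = (\<lambda>(k, l). \<Sum>j=1..n. sign_vec S j * hartley n j k * hartley n j l)"

lemma hartley_flip_in_orth_fix_xi:
  assumes "n > 0" and "S \<subseteq> {1..n-1}"
  shows "hartley_flip n S \<in> orth_fix_xi n"
proof -
  have orthogonal: "(\<Sum>k=1..n. hartley_flip n S (k, i) * hartley_flip n S (k, j)) = (if i = j then 1 else 0)"
    if "i \<in> {1..n}" and "j \<in> {1..n}" for i j
  proof -
    have "(\<Sum>k=1..n. hartley_flip n S (k, i) * hartley_flip n S (k, j))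
        = (\<Sum>a=1..n. (sign_vec S a * hartley n a i) * (sign_vec S a * hartley n a j))"
      unfolding hartley_flip_def
      using hartley_synthesis_inner[OF \<open>n > 0\<close>, of "\<lambda>a. sign_vec S a * hartley n a i" "\<lambda>a. sign_vec S a * hartley n a j"]
      by (simp add: mult_ac)
    also have "\<dots> = (\<Sum>a=1..n. hartley n i a * hartley n j a)"
      by (intro sum.cong refl) (simp add: sign_vec_def hartley_commute)
    finally show ?thesis
      using hartley_orthonormal[OF \<open>n > 0\<close> that] by simp
  qed
  have fixes_xi: "(\<Sum>l=1..n. hartley_flip n S (i, l) * (1 / sqrt (real n))) = 1 / sqrt (real n)"
    if "i \<in> {1..n}" for i
  proof -
    have "(\<Sum>l=1..n. hartley_flip n S (i, l)) = (\<Sum>a=1..n. sign_vec S a * hartley n a i * (\<Sum>l=1..n. hartley n a l))"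
      unfolding hartley_flip_def by (simp add: sum_distrib_left) (rule sum.swap)
    also have "\<dots> = (\<Sum>a=1..n. if a = n then sign_vec S a * hartley n a i * sqrt (real n) else 0)"
      by (intro sum.cong refl) (subst hartley_row_sum[OF \<open>n > 0\<close>]; auto)
    also have "\<dots> = sign_vec S n * hartley n n i * sqrt (real n)"
      using \<open>n > 0\<close> by simp
    also have "\<dots> = 1"
      using assms by (auto simp: sign_vec_def hartley_last_row)
    finally show ?thesis
      by (simp flip: sum_divide_distrib)
  qed
  show ?thesis
    unfolding orth_fix_xi_def using orthogonal fixes_xi by blast
qed

lemma hartley_flip_apply:
  assumes "n > 0" and "(\<Sum>l=1..n. v l) = 0"
  shows "(\<Sum>l=1..n. hartley_flip n S (k, l) * v l)
    = (\<Sum>j\<in>{1..n-1}. sign_vec S j * (hartley n j k * (\<Sum>l=1..n. hartley n j l * v l)))"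
proof -
  have "(\<Sum>l=1..n. hartley_flip n S (k, l) * v l) = (\<Sum>j=1..n. sign_vec S j * (hartley n j k * (\<Sum>l=1..n. hartley n j l * v l)))"
    unfolding hartley_flip_def by (simp add: sum_distrib_left sum_distrib_right mult_ac) (rule sum.swap)
  also have "\<dots> = (\<Sum>j\<in>{1..n-1}. sign_vec S j * (hartley n j k * (\<Sum>l=1..n. hartley n j l * v l)))
      + sign_vec S n * (hartley n n k * (\<Sum>l=1..n. hartley n n l * v l))"
    using assms by (cases n) (simp_all add: sum.cl_ivl_Suc)
  also have "(\<Sum>l=1..n. hartley n n l * v l) = 0"
    using assms by (simp add: hartley_last_row flip: sum_divide_distrib)
  finally show ?thesis
    by simp
qed

lemma card_hartley_flip_abs_ge:
  assumes "n > 0" and "(\<Sum>l=1..n. v l) = 0" and "(\<Sum>l=1..n. (v l)\<^sup>2) \<le> 1" and "t \<ge> 0"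
  shows "real (card {S\<in>Pow {1..n-1}. t \<le> \<bar>\<Sum>l=1..n. hartley_flip n S (k, l) * v l\<bar>})
    \<le> 2 ^ n * exp (- real n * t\<^sup>2 / 4)"
proof -
  define a where "a j = (\<Sum>l=1..n. hartley n j l * v l)" for j
  define c where "c j = hartley n j k * a j" for j
  have "(\<Sum>j\<in>{1..n-1}. (c j)\<^sup>2) \<le> (\<Sum>j\<in>{1..n}. 2 / real n * (a j)\<^sup>2)"
  proof (rule order.trans[OF sum_mono sum_mono2])
    show "(c j)\<^sup>2 \<le> 2 / real n * (a j)\<^sup>2" for j
      unfolding c_def power_mult_distrib by (intro mult_right_mono hartley_square_le) simp
  qed auto
  also have "\<dots> = 2 / real n * (\<Sum>l=1..n. (v l)\<^sup>2)"
    unfolding a_def by (simp only: hartley_parseval[OF \<open>n > 0\<close>] flip: sum_distrib_left)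
  also have "\<dots> \<le> 2 / real n"
    by (rule mult_left_le) (use assms in simp_all)
  finally have variance: "(\<Sum>j\<in>{1..n-1}. (c j)\<^sup>2) \<le> 2 / real n" .
  have "real (card {S\<in>Pow {1..n-1}. t \<le> \<bar>\<Sum>l=1..n. hartley_flip n S (k, l) * v l\<bar>})
      = real (card {S\<in>Pow {1..n-1}. t \<le> \<bar>\<Sum>j\<in>{1..n-1}. sign_vec S j * c j\<bar>})"
    by (simp only: hartley_flip_apply[OF assms(1,2)] a_def c_def)
  also have "\<dots> \<le> 2 * 2 ^ card {1..n-1} * exp (- t\<^sup>2 / (2 * (2 / real n)))"
    using assms variance by (intro card_sign_vec_sum_abs_ge) auto
  also have "\<dots> = 2 ^ n * exp (- real n * t\<^sup>2 / 4)"
    using assms by (cases n) (simp_all add: algebra_simps)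
  finally show ?thesis .
qed

section \<open>The matrix W\<close>

definition W_centered :: "nat \<Rightarrow> (nat \<times> nat \<Rightarrow> real) \<Rightarrow> nat \<Rightarrow> nat \<Rightarrow> real" where
  "W_centered m Qh i k = (\<Sum>r=1..m-1. Lmat m i r * Qh (k, r))"

lemma Wmat_eq_W_centered:
  assumes "m \<ge> 1"
  shows "Wmat m n Qh i k = W_centered m Qh i k + 1 / sqrt (real m * real n)"
proof -
  have "(\<Sum>r=1..m. Lmat m i r * Qmat m n Qh r k) = (\<Sum>r=1..m-1. Lmat m i r * Qmat m n Qh r k) + Lmat m i m * Qmat m n Qh m k"
    using assms by (cases m) (simp_all add: sum.cl_ivl_Suc)
  also have "\<dots> = W_centered m Qh i k"
    unfolding W_centered_def by (auto simp: Lmat_def Qmat_def intro: sum.cong)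
  finally show ?thesis
    unfolding Wmat_def by simp
qed

lemma sum_inverse_consecutive_products:
  assumes "1 \<le> i" and "i \<le> m"
  shows "(\<Sum>r\<in>{1..<i}. 1 / ((real m - real r + 1) * (real m - real r))) = 1 / (real m - real i + 1) - 1 / real m"
  using assms
proof (induction i rule: dec_induct)
  case base
  then show ?case by simp
next
  case (step j)
  define x where "x = real m - real j"
  have "x \<noteq> 0" and "x + 1 \<noteq> 0"
    using step by (simp_all add: x_def)
  have "{1..<Suc j} = insert j {1..<j}"
    using step by auto
  then have "(\<Sum>r\<in>{1..<Suc j}. 1 / ((real m - real r + 1) * (real m - real r)))
      = 1 / ((x + 1) * x) + (1 / (x + 1) - 1 / real m)"
    using step by (simp add: x_def)
  also have "\<dots> = 1 / x - 1 / real m"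
  proof -
    have "1 / ((x + 1) * x) + 1 / (x + 1) = 1 / x"
      using \<open>x \<noteq> 0\<close> \<open>x + 1 \<noteq> 0\<close> by (simp add: divide_simps)
    then show ?thesis
      by linarith
  qed
  also have "x = real m - real (Suc j) + 1"
    by (simp add: x_def)
  finally show ?case .
qed

lemma Lmat_row_sum_squares:
  assumes "i \<in> {1..m}"
  shows "(\<Sum>r=1..m-1. (Lmat m i r)\<^sup>2) = 1 - 1 / real m"
proof -
  define d where "d = (if i < m then (real m - real i) / (real m - real i + 1) else 0)"
  have entry: "(Lmat m i r)\<^sup>2 = (if r = i then d else 0) + (if r < i then 1 / ((real m - real r + 1) * (real m - real r)) else 0)"
    if "r \<in> {1..m-1}" for r
    using that assms
    by (auto simp: Lmat_def d_def power_divide real_sqrt_mult power_mult_distrib)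
  have "(\<Sum>r=1..m-1. if r = i then d else 0) = d"
    using assms by (auto simp: d_def)
  moreover have "{r\<in>{1..m-1}. r < i} = {1..<i}"
    using assms by auto
  ultimately have "(\<Sum>r=1..m-1. (Lmat m i r)\<^sup>2) = d + (\<Sum>r\<in>{1..<i}. 1 / ((real m - real r + 1) * (real m - real r)))"
    by (simp add: entry sum.distrib sum.inter_filter[symmetric])
  also have "\<dots> = d + 1 / (real m - real i + 1) - 1 / real m"
    using sum_inverse_consecutive_products[of i m] assms by simp
  also have "d + 1 / (real m - real i + 1) = 1"
  proof (cases "i < m")
    case True
    then have "real m - real i + 1 > 0"
      by simp
    then show ?thesis
      using True by (simp add: d_def field_simps)
  qed (use assms in \<open>simp add: d_def\<close>)
  finally show ?thesis .
qed

lemma W_centered_row_sum: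
  assumes "Qh \<in> stiefel_perp n (m - 1)" and "n > 0"
  shows "(\<Sum>k=1..n. W_centered m Qh i k) = 0"
proof -
  have "(\<Sum>k=1..n. Qh (k, r)) = 0" if "r \<in> {1..m-1}" for r
    using assms that unfolding stiefel_perp_def by (simp flip: sum_divide_distrib)
  then show ?thesis
    unfolding W_centered_def by (subst sum.swap) (simp flip: sum_distrib_left)
qed

lemma W_centered_row_sum_squares:
  assumes "Qh \<in> stiefel_perp n (m - 1)"
  shows "(\<Sum>k=1..n. (W_centered m Qh i k)\<^sup>2) = (\<Sum>r=1..m-1. (Lmat m i r)\<^sup>2)"
proof -
  have orthonormal: "(\<Sum>k=1..n. Qh (k, r) * Qh (k, r')) = (if r = r' then 1 else 0)"
    if "r \<in> {1..m-1}" "r' \<in> {1..m-1}" for r r'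
    using assms that unfolding stiefel_perp_def by blast
  have "(\<Sum>k=1..n. (W_centered m Qh i k)\<^sup>2)
      = (\<Sum>k=1..n. \<Sum>r=1..m-1. \<Sum>r'=1..m-1. (Lmat m i r * Lmat m i r') * (Qh (k, r) * Qh (k, r')))"
    unfolding W_centered_def power2_eq_square sum_product by (simp add: mult_ac)
  also have "\<dots> = (\<Sum>r=1..m-1. \<Sum>r'=1..m-1. (Lmat m i r * Lmat m i r') * (\<Sum>k=1..n. Qh (k, r) * Qh (k, r')))"
    by (subst sum.swap, rule sum.cong[OF refl], subst sum.swap) (simp add: sum_distrib_left)
  also have "\<dots> = (\<Sum>r=1..m-1. \<Sum>r'=1..m-1. if r = r' then Lmat m i r * Lmat m i r' else 0)"
    by (intro sum.cong refl) (subst orthonormal; auto)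
  also have "\<dots> = (\<Sum>r=1..m-1. (Lmat m i r)\<^sup>2)"
    by (simp add: power2_eq_square)
  finally show ?thesis .
qed

lemma W_centered_lmul:
  assumes "k \<in> {1..n}"
  shows "W_centered m (lmul n (m - 1) U Qh) i k = (\<Sum>l=1..n. U (k, l) * W_centered m Qh i l)"
proof -
  have "W_centered m (lmul n (m - 1) U Qh) i k = (\<Sum>r=1..m-1. Lmat m i r * (\<Sum>l=1..n. U (k, l) * Qh (l, r)))"
    unfolding W_centered_def lmul_def using assms by (intro sum.cong refl) auto
  also have "\<dots> = (\<Sum>l=1..n. U (k, l) * W_centered m Qh i l)"
    unfolding W_centered_def by (simp add: sum_distrib_left mult_ac) (rule sum.swap)
  finally show ?thesis .
qed

section \<open>Tail bounds\<close>

lemma measure_le_by_invariance: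
  fixes Y :: "'a \<Rightarrow> 'b" and g :: "'i \<Rightarrow> 'b \<Rightarrow> 'b"
  assumes "prob_space P" and Y: "Y \<in> measurable P K" and B: "B \<in> sets K"
    and "finite I" and "I \<noteq> {}"
    and g: "\<And>i. i \<in> I \<Longrightarrow> g i \<in> measurable K K"
    and invariant: "\<And>i. i \<in> I \<Longrightarrow> distr P K (\<lambda>\<omega>. g i (Y \<omega>)) = distr P K Y"
    and count: "AE \<omega> in P. real (card {i\<in>I. g i (Y \<omega>) \<in> B}) \<le> b"
  shows "measure P {\<omega>\<in>space P. Y \<omega> \<in> B} \<le> b / real (card I)"
proof -
  interpret prob_space P by fact
  define E where "E i = {\<omega>\<in>space P. g i (Y \<omega>) \<in> B}" for i
  have gY: "(\<lambda>\<omega>. g i (Y \<omega>)) \<in> measurable P K" if "i \<in> I" for i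
    using measurable_comp[OF Y g[OF that]] by (simp add: comp_def)
  have E: "E i \<in> sets P" if "i \<in> I" for i
    using measurable_sets[OF gY[OF that] B] unfolding E_def by (simp add: vimage_def Int_def conj_commute)
  have "measure P {\<omega>\<in>space P. Y \<omega> \<in> B} = measure P (E i)" if "i \<in> I" for i
  proof -
    have "measure P {\<omega>\<in>space P. Y \<omega> \<in> B} = measure (distr P K Y) B"
      using measure_distr[OF Y B] by (simp add: vimage_def Int_def conj_commute)
    also have "\<dots> = measure P (E i)"
      using measure_distr[OF gY[OF that] B] invariant[OF that]
      by (simp add: E_def vimage_def Int_def conj_commute)
    finally show ?thesis .
  qed
  then have "(\<Sum>i\<in>I. measure P (E i)) = (\<Sum>i\<in>I. measure P {\<omega>\<in>space P. Y \<omega> \<in> B})"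
    by (intro sum.cong) auto
  then have "real (card I) * measure P {\<omega>\<in>space P. Y \<omega> \<in> B} = (\<Sum>i\<in>I. measure P (E i))"
    by simp
  also have "\<dots> = (\<Sum>i\<in>I. \<integral>\<omega>. indicator (E i) \<omega> \<partial>P)"
    using E by (intro sum.cong refl) (simp add: sets.Int_space_eq2)
  also have "\<dots> = (\<integral>\<omega>. (\<Sum>i\<in>I. indicator (E i) \<omega>) \<partial>P)"
    using E by (intro Bochner_Integration.integral_sum[symmetric] integrable_real_indicator)
      (auto simp: less_top[symmetric])
  also have "\<dots> \<le> (\<integral>\<omega>. b \<partial>P)"
  proof (rule integral_mono_AE)
    show "integrable P (\<lambda>\<omega>. \<Sum>i\<in>I. indicator (E i) \<omega> :: real)"
      using E by (intro Bochner_Integration.integrable_sum integrable_real_indicator)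
        (auto simp: less_top[symmetric])
    have "(\<Sum>i\<in>I. indicator (E i) \<omega>) = real (card {i\<in>I. g i (Y \<omega>) \<in> B})" if "\<omega> \<in> space P" for \<omega>
      using that \<open>finite I\<close> by (simp add: E_def indicator_def sum.inter_filter[symmetric] Int_def)
    then show "AE \<omega> in P. (\<Sum>i\<in>I. indicator (E i) \<omega>) \<le> b"
      using count by (auto elim!: AE_mp intro!: AE_I2)
  qed simp
  also have "\<dots> = b"
    by (simp add: prob_space)
  finally have "real (card I) * measure P {\<omega>\<in>space P. Y \<omega> \<in> B} \<le> b" .
  moreover have "real (card I) > 0"
    using \<open>finite I\<close> \<open>I \<noteq> {}\<close> by (simp add: card_gt_0_iff)
  ultimately show ?thesis
    by (simp add: pos_le_divide_eq mult.commute)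
qed

lemma lmul_measurable: "lmul n k U \<in> measurable (mat_space n k) (mat_space n k)"
  unfolding lmul_def mat_space_def
proof (rule measurable_restrict)
  fix ij assume ij: "ij \<in> {1..n} \<times> {1..k}"
  obtain i j where ij_eq: "ij = (i, j)"
    by (cases ij)
  have "(\<lambda>Q. \<Sum>l=1..n. U (i, l) * Q (l, j)) \<in> borel_measurable (PiM ({1..n} \<times> {1..k}) (\<lambda>_. borel))"
    using ij ij_eq by (intro borel_measurable_sum borel_measurable_times borel_measurable_const measurable_component_singleton) auto
  then show "(\<lambda>Q. case ij of (i, j) \<Rightarrow> \<Sum>l=1..n. U (i, l) * Q (l, j)) \<in> borel_measurable (PiM ({1..n} \<times> {1..k}) (\<lambda>_. borel))"
    unfolding ij_eq by simp
qed

lemma W_centered_measurable: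
  assumes "k \<in> {1..n}"
  shows "(\<lambda>Qh. W_centered m Qh i k) \<in> borel_measurable (mat_space n (m - 1))"
  unfolding W_centered_def mat_space_def
  using assms by (intro borel_measurable_sum borel_measurable_times borel_measurable_const measurable_component_singleton) auto

lemma lmul_in_space: "lmul n k U Q \<in> space (mat_space n k)"
  by (simp add: lmul_def mat_space_def space_PiM)

lemma card_hartley_flip_W_centered_ge:
  assumes "Qh \<in> stiefel_perp n (m - 1)" and "n > 0" and "i \<in> {1..m}" and "k \<in> {1..n}" and "t \<ge> 0"
  shows "real (card {S\<in>Pow {1..n-1}. t \<le> \<bar>W_centered m (lmul n (m - 1) (hartley_flip n S) Qh) i k\<bar>})
    \<le> 2 ^ n * exp (- real n * t\<^sup>2 / 4)"
proof -
  have "(\<Sum>l=1..n. (W_centered m Qh i l)\<^sup>2) \<le> 1"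
    using W_centered_row_sum_squares[OF assms(1), of i] Lmat_row_sum_squares[OF assms(3)] by simp
  then show ?thesis
    unfolding W_centered_lmul[OF assms(4)]
    using card_hartley_flip_abs_ge[OF \<open>n > 0\<close> W_centered_row_sum[OF assms(1,2)] _ \<open>t \<ge> 0\<close>] by simp
qed

lemma W_centered_tail_bound:
  assumes "prob_space P" and haar: "haar_stiefel_perp P n (m - 1) Y"
    and "n > 0" and "i \<in> {1..m}" and "k \<in> {1..n}" and "t \<ge> 0"
  shows "measure P {\<omega>\<in>space P. t \<le> \<bar>W_centered m (Y \<omega>) i k\<bar>} \<le> 2 * exp (- real n * t\<^sup>2 / 4)"
proof -
  define K where "K = mat_space n (m - 1)"
  define B where "B = {Qh\<in>space K. t \<le> \<bar>W_centered m Qh i k\<bar>}"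
  define g where "g S = lmul n (m - 1) (hartley_flip n S)" for S
  have Y: "Y \<in> measurable P K"
    using haar unfolding haar_stiefel_perp_def K_def by blast
  have "B \<in> sets K"
    unfolding B_def K_def using W_centered_measurable[OF \<open>k \<in> {1..n}\<close>] by measurable
  have count: "real (card {S\<in>Pow {1..n-1}. g S Qh \<in> B}) \<le> 2 ^ n * exp (- real n * t\<^sup>2 / 4)"
    if "Qh \<in> stiefel_perp n (m - 1)" for Qh
    using card_hartley_flip_W_centered_ge[OF that assms(3-6)]
    by (simp add: B_def K_def g_def lmul_in_space)
  have "measure P {\<omega>\<in>space P. Y \<omega> \<in> B} \<le> 2 ^ n * exp (- real n * t\<^sup>2 / 4) / real (card (Pow {1..n-1}))"
  proof (rule measure_le_by_invariance[OF \<open>prob_space P\<close> Y \<open>B \<in> sets K\<close>])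
    fix S assume "S \<in> Pow {1..n-1}"
    then have "hartley_flip n S \<in> orth_fix_xi n"
      using \<open>n > 0\<close> by (intro hartley_flip_in_orth_fix_xi) auto
    then show "distr P K (\<lambda>\<omega>. g S (Y \<omega>)) = distr P K Y"
      using haar unfolding haar_stiefel_perp_def K_def g_def by blast
  next
    show "AE \<omega> in P. real (card {S\<in>Pow {1..n-1}. g S (Y \<omega>) \<in> B}) \<le> 2 ^ n * exp (- real n * t\<^sup>2 / 4)"
    proof -
      have "AE \<omega> in P. Y \<omega> \<in> stiefel_perp n (m - 1)"
        using haar unfolding haar_stiefel_perp_def by blast
      then show ?thesis
        by (rule AE_mp) (intro AE_I2 impI count)
    qed
  qed (auto simp: g_def K_def lmul_measurable)
  also have "\<dots> = 2 * exp (- real n * t\<^sup>2 / 4)"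
    using \<open>n > 0\<close> by (cases n) (simp_all add: card_Pow)
  also have "{\<omega>\<in>space P. Y \<omega> \<in> B} = {\<omega>\<in>space P. t \<le> \<bar>W_centered m (Y \<omega>) i k\<bar>}"
    using measurable_space[OF Y] by (auto simp: B_def)
  finally show ?thesis .
qed

lemma Max_abs_Wmat_ge_imp_W_centered:
  assumes "m \<ge> 1" and "n \<ge> 1"
    and "Max {\<bar>Wmat m n Qh i j\<bar> | i j. i \<in> {1..m} \<and> j \<in> {1..n}} \<ge> t + 1 / sqrt (real m * real n)"
  shows "\<exists>i\<in>{1..m}. \<exists>k\<in>{1..n}. t \<le> \<bar>W_centered m Qh i k\<bar>"
proof -
  define entries where "entries = {\<bar>Wmat m n Qh i j\<bar> | i j. i \<in> {1..m} \<and> j \<in> {1..n}}"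
  have "finite entries"
    unfolding entries_def by (rule finite_image_set2) auto
  moreover have "\<bar>Wmat m n Qh 1 1\<bar> \<in> entries"
    unfolding entries_def using assms by auto
  ultimately have "\<exists>x\<in>entries. t + 1 / sqrt (real m * real n) \<le> x"
    using Max_ge_iff assms(3) unfolding entries_def[symmetric] by blast
  then obtain i k where "i \<in> {1..m}" "k \<in> {1..n}" and "t + 1 / sqrt (real m * real n) \<le> \<bar>Wmat m n Qh i k\<bar>"
    unfolding entries_def by blast
  moreover have "\<bar>Wmat m n Qh i k\<bar> \<le> \<bar>W_centered m Qh i k\<bar> + 1 / sqrt (real m * real n)"
    unfolding Wmat_eq_W_centered[OF \<open>m \<ge> 1\<close>]
    using abs_triangle_ineq[of "W_centered m Qh i k" "1 / sqrt (real m * real n)"] by simp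
  ultimately show ?thesis
    by force
qed

lemma Max_abs_Wmat_tail_bound:
  assumes "prob_space P" and haar: "haar_stiefel_perp P n (m - 1) Y"
    and "m \<ge> 1" and "n \<ge> 1" and "t \<ge> 0"
  shows "measure P {\<omega>\<in>space P.
            Max {\<bar>Wmat m n (Y \<omega>) i j\<bar> | i j. i \<in> {1..m} \<and> j \<in> {1..n}} \<ge> t + 1 / sqrt (real m * real n)}
    \<le> 2 * real m * real n * exp (- real n * t\<^sup>2 / 4)"
proof -
  interpret prob_space P by fact
  define E where "E ik = {\<omega>\<in>space P. t \<le> \<bar>W_centered m (Y \<omega>) (fst ik) (snd ik)\<bar>}" for ik
  have "E ik \<in> sets P" if "ik \<in> {1..m} \<times> {1..n}" for ik
  proof -
    have "Y \<in> measurable P (mat_space n (m - 1))"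
      using haar unfolding haar_stiefel_perp_def by blast
    moreover have "snd ik \<in> {1..n}"
      using that by auto
    ultimately have "(\<lambda>\<omega>. W_centered m (Y \<omega>) (fst ik) (snd ik)) \<in> borel_measurable P"
      by (intro measurable_compose[OF _ W_centered_measurable])
    then show ?thesis
      unfolding E_def by measurable
  qed
  moreover have "{\<omega>\<in>space P.
            Max {\<bar>Wmat m n (Y \<omega>) i j\<bar> | i j. i \<in> {1..m} \<and> j \<in> {1..n}} \<ge> t + 1 / sqrt (real m * real n)}
      \<subseteq> (\<Union>ik\<in>{1..m} \<times> {1..n}. E ik)"
    using Max_abs_Wmat_ge_imp_W_centered[OF \<open>m \<ge> 1\<close> \<open>n \<ge> 1\<close>] by (fastforce simp: E_def)
  ultimately have "measure P {\<omega>\<in>space P.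
            Max {\<bar>Wmat m n (Y \<omega>) i j\<bar> | i j. i \<in> {1..m} \<and> j \<in> {1..n}} \<ge> t + 1 / sqrt (real m * real n)}
      \<le> (\<Sum>ik\<in>{1..m} \<times> {1..n}. measure P (E ik))"
    by (intro order.trans[OF finite_measure_mono measure_UNION_le]) auto
  also have "\<dots> \<le> (\<Sum>ik\<in>{1..m} \<times> {1..n}. 2 * exp (- real n * t\<^sup>2 / 4))"
    using assms unfolding E_def by (intro sum_mono W_centered_tail_bound) auto
  also have "\<dots> = 2 * real m * real n * exp (- real n * t\<^sup>2 / 4)"
    by (simp add: card_cartesian_product)
  finally show ?thesis .
qed

lemma Max_abs_Wmat_sqrt_log_tail_bound:
  assumes "prob_space P" and "haar_stiefel_perp P n (m - 1) Y"
    and "m \<ge> 1" and "n \<ge> 1" and "C \<ge> 0"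
  shows "measure P {\<omega>\<in>space P.
            Max {\<bar>Wmat m n (Y \<omega>) i j\<bar> | i j. i \<in> {1..m} \<and> j \<in> {1..n}}
              \<ge> C * sqrt (ln (real n) / real n) + 1 / sqrt (real m * real n)}
    \<le> 2 * real m * real n powr (1 - C\<^sup>2 / 4)"
proof -
  have "C * sqrt (ln (real n) / real n) \<ge> 0"
    using assms by simp
  then have "measure P {\<omega>\<in>space P.
            Max {\<bar>Wmat m n (Y \<omega>) i j\<bar> | i j. i \<in> {1..m} \<and> j \<in> {1..n}}
              \<ge> C * sqrt (ln (real n) / real n) + 1 / sqrt (real m * real n)}
    \<le> 2 * real m * (real n * exp (- real n * (C * sqrt (ln (real n) / real n))\<^sup>2 / 4))"
    using Max_abs_Wmat_tail_bound[OF assms(1-4)] by (simp only: mult.assoc)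
  also have "real n * exp (- real n * (C * sqrt (ln (real n) / real n))\<^sup>2 / 4)
      = exp (ln (real n)) * exp (- (C\<^sup>2 / 4) * ln (real n))"
    using assms by (simp add: power_mult_distrib)
  also have "\<dots> = real n powr (1 - C\<^sup>2 / 4)"
    using assms by (simp only: mult_exp_exp) (simp add: powr_def algebra_simps)
  finally show ?thesis .
qed

theorem theorem3:
  fixes m :: nat and C :: real
    and M :: "nat \<Rightarrow> 'a measure" and X :: "nat \<Rightarrow> 'a \<Rightarrow> nat \<times> nat \<Rightarrow> real"
  assumes "m \<ge> 2" and "C > 2"
    and "\<And>n. n \<ge> m \<Longrightarrow> prob_space (M n)"
    and "\<And>n. n \<ge> m \<Longrightarrow> haar_stiefel_perp (M n) n (m - 1) (X n)"
  shows "(\<lambda>n. measure (M n) {\<omega> \<in> space (M n).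
            Max {\<bar>Wmat m n (X n \<omega>) i j\<bar> | i j. i \<in> {1..m} \<and> j \<in> {1..n}}
              \<ge> C * sqrt (ln (real n) / real n) + 1 / sqrt (real m * real n)})
         \<longlonglongrightarrow> 0"
proof (rule Lim_null_comparison)
  show "\<forall>\<^sub>F n in sequentially. norm (measure (M n) {\<omega> \<in> space (M n).
            Max {\<bar>Wmat m n (X n \<omega>) i j\<bar> | i j. i \<in> {1..m} \<and> j \<in> {1..n}}
              \<ge> C * sqrt (ln (real n) / real n) + 1 / sqrt (real m * real n)})
      \<le> 2 * real m * real n powr (1 - C\<^sup>2 / 4)"
    using eventually_ge_at_top[of m]
  proof eventually_elim
    case (elim n)
    then show ?case
      using Max_abs_Wmat_sqrt_log_tail_bound[OF assms(3,4)[OF elim]] assms by simp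
  qed
  have "C\<^sup>2 > 2\<^sup>2"
    using \<open>C > 2\<close> by (intro power_strict_mono) auto
  then show "(\<lambda>n. 2 * real m * real n powr (1 - C\<^sup>2 / 4)) \<longlonglongrightarrow> 0"
    by (auto intro!: tendsto_mult_right_zero tendsto_neg_powr filterlim_real_sequentially)
qed

end
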